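(* Let $(G,\cdot)$ be a loop with identity $e$ and let $(H,\cdot)$ be a non-trivial subloop of $G$ such that $(xs\cdot z)s=x(sz\cdot s)$ for all $x,z\in G$ and $s\in H$. Then $$xs^m\cdot s^n=xs^{m+n}$$ for all $x\in G$, $s\in H$ and $m,n\in\mathbb{Z}$.
   Context: Juxtaposition binds more tightly than $\cdot$. For $s\in H$, the left and right inverses of $s$ coincide under the hypothesis; denote this common inverse by $s^{-1}$. Powers of $s\in H$ are defined by $s^0=e$, $s^n=s^{n-1}\cdot s$ for $n>0$, and $s^n=(s^{-1})^{|n|}$ for $n<0$. *)

theory Defs
  imports Main
begin

definition loop :: "'a set \<Rightarrow> ('a \<Rightarrow> 'a \<Rightarrow> 'a) \<Rightarrow> 'a \<Rightarrow> bool" where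
  "loop G mul e \<longleftrightarrow>
     (\<forall>x\<in>G. \<forall>y\<in>G. mul x y \<in> G) \<and>
     e \<in> G \<and>
     (\<forall>x\<in>G. mul e x = x \<and> mul x e = x) \<and>
     (\<forall>a\<in>G. \<forall>b\<in>G. \<exists>!x. x \<in> G \<and> mul a x = b) \<and>
     (\<forall>a\<in>G. \<forall>b\<in>G. \<exists>!y. y \<in> G \<and> mul y a = b)"

text \<open>A subloop: a subset that is a loop under the restricted operation
(its identity is necessarily the identity of the ambient loop).\<close>
definition subloop :: "'a set \<Rightarrow> 'a set \<Rightarrow> ('a \<Rightarrow> 'a \<Rightarrow> 'a) \<Rightarrow> 'a \<Rightarrow> bool" where
  "subloop H G mul e \<longleftrightarrow> H \<subseteq> G \<and> loop H mul e"

text \<open>Inverse of s: the (unique) right inverse in G; under the hypothesis of the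
theorem it coincides with the left inverse.\<close>
definition linv :: "'a set \<Rightarrow> ('a \<Rightarrow> 'a \<Rightarrow> 'a) \<Rightarrow> 'a \<Rightarrow> 'a \<Rightarrow> 'a" where
  "linv G mul e s = (THE y. y \<in> G \<and> mul s y = e)"

fun npow :: "('a \<Rightarrow> 'a \<Rightarrow> 'a) \<Rightarrow> 'a \<Rightarrow> 'a \<Rightarrow> nat \<Rightarrow> 'a" where
  "npow mul e s 0 = e"
| "npow mul e s (Suc n) = mul (npow mul e s n) s"

definition zpow :: "'a set \<Rightarrow> ('a \<Rightarrow> 'a \<Rightarrow> 'a) \<Rightarrow> 'a \<Rightarrow> 'a \<Rightarrow> int \<Rightarrow> 'a" where
  "zpow G mul e s n =
     (if n \<ge> 0 then npow mul e s (nat n) else npow mul e (linv G mul e s) (nat (- n)))"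

end

theory Submission
  imports Defs
begin

text \<open>Right multiplication \<open>\<rho>\<^sub>s : y \<mapsto> y s\<close> and right multiplication by \<open>s\<^sup>-\<^sup>1\<close> are mutually
inverse bijections of \<open>G\<close>: from \<open>(y s \<cdot> s\<^sup>-\<^sup>1) s = y (s s\<^sup>-\<^sup>1 \<cdot> s) = y s\<close> and right
cancellation. The identity also gives \<open>x s\<^sup>k = \<rho>\<^sub>s\<^sup>k x\<close> for \<open>k \<ge> 0\<close>, by induction in steps of
two using \<open>s\<^sup>k\<^sup>+\<^sup>2 = (s s\<^sup>k) s\<close>. Hence \<open>x s\<^sup>k\<close> is the \<open>k\<close>-th iterate of \<open>\<rho>\<^sub>s\<close> for every
integer \<open>k\<close>, and the claim is the additivity of integer iterates of a bijection.\<close>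

lemma loop_mul_closed: "loop G mul e \<Longrightarrow> x \<in> G \<Longrightarrow> y \<in> G \<Longrightarrow> mul x y \<in> G"
  by (simp add: loop_def)

lemma loop_unit_closed: "loop G mul e \<Longrightarrow> e \<in> G"
  by (simp add: loop_def)

lemma loop_left_unit: "loop G mul e \<Longrightarrow> x \<in> G \<Longrightarrow> mul e x = x"
  by (simp add: loop_def)

lemma loop_right_unit: "loop G mul e \<Longrightarrow> x \<in> G \<Longrightarrow> mul x e = x"
  by (simp add: loop_def)

lemma loop_left_div_unique: "loop G mul e \<Longrightarrow> a \<in> G \<Longrightarrow> b \<in> G \<Longrightarrow> \<exists>!x. x \<in> G \<and> mul a x = b"
  by (simp add: loop_def)

lemma loop_right_div: "loop G mul e \<Longrightarrow> a \<in> G \<Longrightarrow> b \<in> G \<Longrightarrow> \<exists>y\<in>G. mul y a = b"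
  unfolding loop_def by (metis (no_types, lifting))

lemma loop_right_cancel:
  assumes "loop G mul e" "a \<in> G" "y1 \<in> G" "y2 \<in> G" "mul y1 a = mul y2 a"
  shows "y1 = y2"
proof -
  have "mul y1 a \<in> G"
    using assms(1,3,2) by (rule loop_mul_closed)
  then have "\<exists>!y. y \<in> G \<and> mul y a = mul y1 a"
    using assms(1,2) by (simp add: loop_def)
  with assms(3-5) show ?thesis by metis
qed

lemma npow_closed: "loop G mul e \<Longrightarrow> s \<in> G \<Longrightarrow> npow mul e s k \<in> G"
  by (induction k) (simp_all add: loop_unit_closed loop_mul_closed)

lemma subloop_linv:
  assumes "loop G mul e" "subloop H G mul e" "s \<in> H"
  shows "linv G mul e s \<in> H" "mul s (linv G mul e s) = e"
proof -
  have "H \<subseteq> G" "loop H mul e"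
    using assms(2) by (simp_all add: subloop_def)
  then obtain y where y: "y \<in> H" "mul s y = e"
    using loop_left_div_unique loop_unit_closed assms(3) by metis
  have "linv G mul e s = y"
    unfolding linv_def
  proof (rule the1_equality)
    show "\<exists>!y. y \<in> G \<and> mul s y = e"
      using loop_left_div_unique[OF assms(1)] loop_unit_closed[OF assms(1)] assms(3) \<open>H \<subseteq> G\<close>
      by blast
    show "y \<in> G \<and> mul s y = e"
      using y \<open>H \<subseteq> G\<close> by blast
  qed
  with y show "linv G mul e s \<in> H" "mul s (linv G mul e s) = e" by simp_all
qed

definition right_bol_elem :: "'a set \<Rightarrow> ('a \<Rightarrow> 'a \<Rightarrow> 'a) \<Rightarrow> 'a \<Rightarrow> bool" where
  "right_bol_elem G mul s \<longleftrightarrow> (\<forall>x\<in>G. \<forall>z\<in>G. mul (mul (mul x s) z) s = mul x (mul (mul s z) s))"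

lemma funpow_right_mul_unit: "((\<lambda>y. mul y s) ^^ k) e = npow mul e s k"
  by (induction k) simp_all

lemma mul_npow_eq_funpow:
  assumes G: "loop G mul e" and s: "s \<in> G" "right_bol_elem G mul s"
  shows "\<forall>x\<in>G. mul x (npow mul e s k) = ((\<lambda>y. mul y s) ^^ k) x"
proof (induction k rule: nat_induct2)
  case 0
  then show ?case by (simp add: loop_right_unit[OF G])
next
  case 1
  then show ?case by (simp add: loop_left_unit[OF G] s(1))
next
  case (step j)
  let ?\<rho> = "\<lambda>y. mul y s"
  have "mul s (npow mul e s j) = (?\<rho> ^^ j) (?\<rho> e)"
    using step s(1) by (simp add: loop_left_unit[OF G])
  also have "\<dots> = (?\<rho> ^^ Suc j) e"
    by (simp add: funpow_Suc_right del: funpow.simps)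
  also have "\<dots> = npow mul e s (Suc j)"
    by (rule funpow_right_mul_unit)
  finally have s_npow: "mul s (npow mul e s j) = npow mul e s (Suc j)" .
  show ?case
  proof
    fix x assume x: "x \<in> G"
    have "mul x (npow mul e s (j + 2)) = mul x (mul (mul s (npow mul e s j)) s)"
      by (simp add: s_npow)
    also have "\<dots> = mul (mul (mul x s) (npow mul e s j)) s"
      using s x npow_closed[OF G s(1)] by (simp add: right_bol_elem_def)
    also have "\<dots> = ?\<rho> ((?\<rho> ^^ j) (?\<rho> x))"
      using step x s(1) loop_mul_closed[OF G] by simp
    also have "\<dots> = (?\<rho> ^^ (j + 2)) x"
      by (metis add_2_eq_Suc' funpow.simps(2) funpow_Suc_right comp_apply)
    finally show "mul x (npow mul e s (j + 2)) = (?\<rho> ^^ (j + 2)) x" .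
  qed
qed

definition zfunpow :: "('a \<Rightarrow> 'a) \<Rightarrow> ('a \<Rightarrow> 'a) \<Rightarrow> int \<Rightarrow> 'a \<Rightarrow> 'a" where
  "zfunpow f g k = (if k \<ge> 0 then f ^^ nat k else g ^^ nat (- k))"

locale inverse_maps_on =
  fixes A :: "'a set" and f g :: "'a \<Rightarrow> 'a"
  assumes f_closed: "x \<in> A \<Longrightarrow> f x \<in> A"
    and g_closed: "x \<in> A \<Longrightarrow> g x \<in> A"
    and g_f: "x \<in> A \<Longrightarrow> g (f x) = x"
    and f_g: "x \<in> A \<Longrightarrow> f (g x) = x"
begin

lemma funpow_closed: "x \<in> A \<Longrightarrow> (h ^^ k) x \<in> A" if "\<And>x. x \<in> A \<Longrightarrow> h x \<in> A"
  using that by (induction k) simp_all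

lemma zfunpow_closed: "x \<in> A \<Longrightarrow> zfunpow f g k x \<in> A"
  by (simp add: zfunpow_def funpow_closed f_closed g_closed)

lemma zfunpow_plus_one: "x \<in> A \<Longrightarrow> zfunpow f g (k + 1) x = f (zfunpow f g k x)"
proof (cases "k \<ge> 0")
  case True
  then show ?thesis by (simp add: zfunpow_def nat_add_distrib)
next
  case False
  assume x: "x \<in> A"
  have "nat (- k) = Suc (nat (- (k + 1)))"
    using False by simp
  then show ?thesis
    using False f_g funpow_closed[OF g_closed x] by (simp add: zfunpow_def)
qed

lemma zfunpow_minus_one: "x \<in> A \<Longrightarrow> zfunpow f g (k - 1) x = g (zfunpow f g k x)"
  using zfunpow_plus_one[of x "k - 1"] g_f zfunpow_closed by simp

lemma zfunpow_add:
  assumes x: "x \<in> A"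
  shows "zfunpow f g n (zfunpow f g m x) = zfunpow f g (m + n) x"
proof (induction n rule: int_induct[where k = 0])
  case base
  then show ?case by (simp add: zfunpow_def)
next
  case (step1 i)
  have "zfunpow f g (i + 1) (zfunpow f g m x) = f (zfunpow f g (m + i) x)"
    using step1 x by (simp add: zfunpow_plus_one zfunpow_closed)
  also have "\<dots> = zfunpow f g (m + (i + 1)) x"
    using x by (simp add: zfunpow_plus_one add.assoc[symmetric])
  finally show ?case .
next
  case (step2 i)
  have "zfunpow f g (i - 1) (zfunpow f g m x) = g (zfunpow f g (m + i) x)"
    using step2 x by (simp add: zfunpow_minus_one zfunpow_closed)
  also have "\<dots> = zfunpow f g (m + (i - 1)) x"
    using x by (simp add: zfunpow_minus_one add_diff_eq)
  finally show ?case .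
qed

end

lemma right_bol_inverse_maps:
  assumes G: "loop G mul e" and s: "s \<in> G" "right_bol_elem G mul s"
    and s': "s' \<in> G" "mul s s' = e"
  shows "inverse_maps_on G (\<lambda>y. mul y s) (\<lambda>y. mul y s')"
proof -
  have cancel: "mul (mul y s) s' = y" if y: "y \<in> G" for y
  proof -
    have "mul (mul (mul y s) s') s = mul y (mul (mul s s') s)"
      using s y s'(1) by (simp add: right_bol_elem_def)
    also have "\<dots> = mul y s"
      using s'(2) s(1) by (simp add: loop_left_unit[OF G])
    finally have "mul (mul (mul y s) s') s = mul y s" .
    moreover have "mul (mul y s) s' \<in> G"
      using s(1) s'(1) y by (simp add: loop_mul_closed[OF G])
    ultimately show ?thesis
      using loop_right_cancel[OF G s(1) _ y] by blast
  qed
  show ?thesis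
  proof
    fix y assume y: "y \<in> G"
    then show "mul y s \<in> G" "mul y s' \<in> G"
      using s(1) s'(1) by (simp_all add: loop_mul_closed[OF G])
    show "mul (mul y s) s' = y"
      using y by (rule cancel)
    obtain w where w: "w \<in> G" "mul w s = y"
      using loop_right_div[OF G s(1) y] by blast
    then show "mul (mul y s') s = y"
      using cancel[OF w(1)] by simp
  qed
qed

lemma mul_zpow_eq_zfunpow:
  assumes G: "loop G mul e" and H: "subloop H G mul e"
    and bol: "\<forall>t\<in>H. right_bol_elem G mul t" and s: "s \<in> H" and x: "x \<in> G"
  shows "mul x (zpow G mul e s k) = zfunpow (\<lambda>y. mul y s) (\<lambda>y. mul y (linv G mul e s)) k x"
proof -
  let ?s' = "linv G mul e s"
  have "s \<in> G" "?s' \<in> G"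
    using H s subloop_linv(1)[OF G H s] by (auto simp: subloop_def)
  moreover have "right_bol_elem G mul s" "right_bol_elem G mul ?s'"
    using bol s subloop_linv(1)[OF G H s] by blast+
  ultimately have "mul x (npow mul e s j) = ((\<lambda>y. mul y s) ^^ j) x"
    and "mul x (npow mul e ?s' j) = ((\<lambda>y. mul y ?s') ^^ j) x" for j
    using mul_npow_eq_funpow[OF G] x by blast+
  then show ?thesis
    by (simp add: zpow_def zfunpow_def)
qed

theorem theorem3p3:
  fixes G H :: "'a set" and mul :: "'a \<Rightarrow> 'a \<Rightarrow> 'a" and e :: 'a
  assumes "loop G mul e"
    and "subloop H G mul e"
    and "H \<noteq> {e}"
    and "\<forall>x\<in>G. \<forall>z\<in>G. \<forall>s\<in>H. mul (mul (mul x s) z) s = mul x (mul (mul s z) s)"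
  shows "\<forall>x\<in>G. \<forall>s\<in>H. \<forall>m n :: int.
           mul (mul x (zpow G mul e s m)) (zpow G mul e s n) = mul x (zpow G mul e s (m + n))"
proof (intro ballI allI)
  fix x s and m n :: int
  assume x: "x \<in> G" and s: "s \<in> H"
  have bol: "\<forall>t\<in>H. right_bol_elem G mul t"
    using assms(4) by (simp add: right_bol_elem_def)
  have "s \<in> G" "linv G mul e s \<in> G"
    using s subloop_linv(1)[OF assms(1,2) s] assms(2) by (auto simp: subloop_def)
  let ?\<rho> = "\<lambda>y. mul y s" and ?\<rho>' = "\<lambda>y. mul y (linv G mul e s)"
  interpret inverse_maps_on G ?\<rho> ?\<rho>'
    using assms(1) \<open>s \<in> G\<close> bol[rule_format, OF s] \<open>linv G mul e s \<in> G\<close>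
      subloop_linv(2)[OF assms(1,2) s] by (rule right_bol_inverse_maps)
  note mul_zpow = mul_zpow_eq_zfunpow[OF assms(1,2) bol s]
  have "mul (mul x (zpow G mul e s m)) (zpow G mul e s n) = zfunpow ?\<rho> ?\<rho>' n (zfunpow ?\<rho> ?\<rho>' m x)"
    using x mul_zpow zfunpow_closed by simp
  also have "\<dots> = zfunpow ?\<rho> ?\<rho>' (m + n) x"
    using x by (rule zfunpow_add)
  also have "\<dots> = mul x (zpow G mul e s (m + n))"
    using x by (rule mul_zpow[symmetric])
  finally show "mul (mul x (zpow G mul e s m)) (zpow G mul e s n) = mul x (zpow G mul e s (m + n))" .
qed

end
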